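(* Let $r\ge 2$ and, for $1\le j\le r$, let $(\alpha^{[j]}_{h})_{h\in\mathbb{N}}$ be sequences of positive reals with $\alpha^{[j]}_h\neq\alpha^{[j]}_\ell$ for $1\le h<\ell<\infty$, and set $\alpha^{[j]}_0=0$. In the $r$-type urn model I with these weights, started from $\mathbf{n}=(n_1,\dots,n_r)$ with all $n_j\ge1$, let $\mathbf{X}_{\mathbf{n}}=(X^{[1]}_{\mathbf{n}},\dots,X^{[r-1]}_{\mathbf{n}})$. Then for all $\mathbf{k}=(k_1,\dots,k_{r-1})$ with $0\le k_j\le n_j$, \[ \mathbb{P}\{\mathbf{X}_{\mathbf{n}}=\mathbf{k}\}=\sum_{\ell_1=k_1}^{n_1}\cdots\sum_{\ell_{r-1}=k_{r-1}}^{n_{r-1}}\frac{\Big(\prod_{f=1}^{n_r}\alpha^{[r]}_f\Big)\prod_{j=1}^{r-1}\Big(\prod_{h_j=k_j+1}^{n_j}\alpha^{[j]}_{h_j}\Big)}{\Big(\prod_{f=1}^{n_r}\big(\alpha^{[r]}_f+\sum_{j=1}^{r-1}\alpha^{[j]}_{\ell_j}\big)\Big)\prod_{j=1}^{r-1}\Big(\prod_{\substack{h_j=k_j\\ h_j\neq\ell_j}}^{n_j}\big(\alpha^{[j]}_{h_j}-\alpha^{[j]}_{\ell_j}\big)\Big)}. \]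
   Context: $r$-type urn model I: the urn contains balls of types $1,\dots,r$, initially $n_j$ balls of type $j$. At each step, if the urn contains $n'_j$ balls of type $j$ ($1\le j\le r$), a ball of type $\ell$ is drawn with probability $\alpha^{[\ell]}_{n'_\ell}/\sum_{j=1}^{r}\alpha^{[j]}_{n'_j}$ and discarded. The process stops when either all type $r$ balls have been drawn or all balls of types $1,\dots,r-1$ have been drawn (absorbing states $(n'_1,\dots,n'_{r-1},0)$ and $(0,\dots,0,n'_r)$). $X^{[j]}_{\mathbf{n}}$ is the number of type $j$ balls in the urn when the process stops. Empty products equal $1$. *)

theory Defs
  imports Complex_Main "HOL-Library.FuncSet"
begin

text \<open>Urn model I with types 1..r.  A state is a function s :: nat => nat, s j being
  the number of balls of type j (only j in {1..r} matters).  alpha j h is the weight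
  alpha^[j]_h.\<close>

definition urn_stopped :: "nat \<Rightarrow> (nat \<Rightarrow> nat) \<Rightarrow> bool" where
  "urn_stopped r s \<longleftrightarrow> s r = 0 \<or> (\<forall>j\<in>{1..r-1}. s j = 0)"

text \<open>urn_absorb r alpha m s E: probability that the process started in state s
  stops in a state satisfying E (m is a step budget; m = total number of balls
  suffices, since each step removes one ball).\<close>

fun urn_absorb :: "nat \<Rightarrow> (nat \<Rightarrow> nat \<Rightarrow> real) \<Rightarrow> nat \<Rightarrow> (nat \<Rightarrow> nat)
                   \<Rightarrow> ((nat \<Rightarrow> nat) \<Rightarrow> bool) \<Rightarrow> real" where
  "urn_absorb r \<alpha> 0 s E = (if E s then 1 else 0)"
| "urn_absorb r \<alpha> (Suc m) s E =
     (if urn_stopped r s then (if E s then 1 else 0)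
      else (\<Sum>l\<in>{1..r}. \<alpha> l (s l) / (\<Sum>j\<in>{1..r}. \<alpha> j (s j))
                          * urn_absorb r \<alpha> m (s(l := s l - 1)) E))"

definition urn_prob_X :: "nat \<Rightarrow> (nat \<Rightarrow> nat \<Rightarrow> real) \<Rightarrow> (nat \<Rightarrow> nat) \<Rightarrow> (nat \<Rightarrow> nat) \<Rightarrow> real" where
  "urn_prob_X r \<alpha> n k =
     urn_absorb r \<alpha> (\<Sum>j\<in>{1..r}. n j) n (\<lambda>s. \<forall>j\<in>{1..r-1}. s j = k j)"

end

theory Submission
  imports Defs "HOL-Computational_Algebra.Polynomial"
begin

text \<open>Read the right-hand side as a function F of the current state s, with k fixed. Removing a
  ball of type j < r multiplies the L-th summand by (\<alpha> j (s j) - \<alpha> j (L j)) / \<alpha> j (s j) and drops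
  the summands with L j = s j; removing a ball of type r multiplies it by
  (\<alpha> r (s r) + \<Sum>j<r. \<alpha> j (L j)) / \<alpha> r (s r). The numerators add up to the total weight
  W s = \<Sum>l. \<alpha> l (s l), so F satisfies the first-step equation W s * F s = \<Sum>l. \<alpha> l (s l) * F (s - e l)
  of the absorption probability. In a stopped state F is the indicator of s = k, because
  \<Sum>l. 1 / \<Prod>h\<noteq>l. (x h - x l) vanishes for two or more distinct nodes: it is the leading
  coefficient of the Lagrange interpolant of the constant 1. Induction on the number of balls
  concludes.\<close>

lemma sum_inverse_prod_differences_eq_0:
  fixes x :: "'b \<Rightarrow> 'a::field"
  assumes fin: "finite A" and inj: "inj_on x A" and card: "card A \<ge> 2"
  shows "(\<Sum>i\<in>A. 1 / (\<Prod>j\<in>A-{i}. x j - x i)) = 0"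
proof -
  define c where "c i = 1 / (\<Prod>j\<in>A-{i}. x j - x i)" for i
  define P where "P i = (\<Prod>j\<in>A-{i}. [:x j, -1:])" for i
  define p where "p = (\<Sum>i\<in>A. smult (c i) (P i))"
  have deg_P: "degree (P i) = card A - 1" if "i \<in> A" for i
    unfolding P_def using fin that by (subst degree_prod_eq_sum_degree) auto
  have lead_coeff_P: "lead_coeff (P i) = (-1) ^ (card A - 1)" if "i \<in> A" for i
    unfolding P_def lead_coeff_prod using fin that by simp
  have poly_p: "poly p (x l) = 1" if l: "l \<in> A" for l
  proof -
    have "poly (P i) (x l) = 0" if "i \<in> A - {l}" for i
      unfolding P_def poly_prod using fin that l by (auto intro: prod_zero)
    then have "poly p (x l) = c l * poly (P l) (x l)"
      unfolding p_def poly_sum by (simp add: sum.remove[OF fin l])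
    moreover have "(\<Prod>j\<in>A-{l}. x j - x l) \<noteq> 0"
      using fin inj l by (auto simp: inj_on_def)
    ultimately show ?thesis by (simp add: c_def P_def poly_prod)
  qed
  have "p = 1"
  proof (rule poly_eqI_degree[of "x ` A"])
    have "degree p \<le> card A - 1"
      unfolding p_def using deg_P
      by (intro degree_sum_le) (auto simp: fin intro: order.trans[OF degree_smult_le])
    then show "degree p < card (x ` A)" and "degree (1 :: 'a poly) < card (x ` A)"
      using card card_image[OF inj] by simp_all
  qed (use poly_p in auto)
  moreover have "coeff p (card A - 1) = (-1) ^ (card A - 1) * (\<Sum>i\<in>A. c i)"
    unfolding p_def coeff_sum sum_distrib_left
    by (rule sum.cong) (use deg_P lead_coeff_P in \<open>auto simp: mult.commute\<close>)
  ultimately show ?thesis using card by (simp add: c_def)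
qed

definition lagrange_weight :: "(nat \<Rightarrow> 'a::field) \<Rightarrow> nat \<Rightarrow> nat \<Rightarrow> nat \<Rightarrow> 'a" where
  "lagrange_weight x a m l = (\<Prod>h\<in>{a+1..m}. x h) / (\<Prod>h\<in>{a..m}-{l}. x h - x l)"

lemma sum_lagrange_weight:
  assumes "inj_on x {a..m}"
  shows "(\<Sum>l\<in>{a..m}. lagrange_weight x a m l) = (if m = a then 1 else 0)"
proof (cases "a < m")
  case True
  have "(\<Sum>l\<in>{a..m}. lagrange_weight x a m l)
      = (\<Prod>h\<in>{a+1..m}. x h) * (\<Sum>l\<in>{a..m}. 1 / (\<Prod>h\<in>{a..m}-{l}. x h - x l))"
    by (simp add: lagrange_weight_def sum_distrib_left)
  also have "\<dots> = 0"
    using True assms by (simp add: sum_inverse_prod_differences_eq_0)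
  finally show ?thesis using True by simp
qed (auto simp: lagrange_weight_def)

lemma lagrange_weight_Suc:
  assumes "a \<le> l" "l \<le> m" "x (Suc m) \<noteq> x l"
  shows "(x (Suc m) - x l) * lagrange_weight x a (Suc m) l = x (Suc m) * lagrange_weight x a m l"
proof -
  have "{a+1..Suc m} = insert (Suc m) {a+1..m}" and "{a..Suc m} - {l} = insert (Suc m) ({a..m} - {l})"
    using assms by auto
  then have "lagrange_weight x a (Suc m) l
      = (x (Suc m) * (\<Prod>h\<in>{a+1..m}. x h)) / ((x (Suc m) - x l) * (\<Prod>h\<in>{a..m}-{l}. x h - x l))"
    by (simp add: lagrange_weight_def)
  with assms(3) show ?thesis
    by (simp add: lagrange_weight_def)
qed

definition shifted_ratio_prod :: "(nat \<Rightarrow> 'a::field) \<Rightarrow> nat \<Rightarrow> 'a \<Rightarrow> 'a" where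
  "shifted_ratio_prod y m \<sigma> = (\<Prod>f\<in>{1..m}. y f / (y f + \<sigma>))"

lemma shifted_ratio_prod_Suc:
  assumes "y (Suc m) + \<sigma> \<noteq> 0"
  shows "(y (Suc m) + \<sigma>) * shifted_ratio_prod y (Suc m) \<sigma> = y (Suc m) * shifted_ratio_prod y m \<sigma>"
  using assms by (simp add: shifted_ratio_prod_def prod.cl_ivl_Suc)

lemma PiE_atLeastAtMost_fun_upd_Suc:
  assumes "j \<in> I" "s j = Suc m"
  shows "Pi\<^sub>E I (\<lambda>i. {k i..(s(j := m)) i}) = {L \<in> Pi\<^sub>E I (\<lambda>i. {k i..s i}). L j \<noteq> s j}"
proof (rule set_eqI)
  fix L
  have "L i \<in> {k i..(s(j := m)) i} \<longleftrightarrow> L i \<in> {k i..s i} \<and> (i = j \<longrightarrow> L i \<noteq> s i)" for i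
    using assms(2) by auto
  with assms(1) show "L \<in> Pi\<^sub>E I (\<lambda>i. {k i..(s(j := m)) i}) \<longleftrightarrow> L \<in> {L \<in> Pi\<^sub>E I (\<lambda>i. {k i..s i}). L j \<noteq> s j}"
    unfolding PiE_iff by blast
qed

definition urn_term ::
  "nat \<Rightarrow> (nat \<Rightarrow> nat \<Rightarrow> real) \<Rightarrow> (nat \<Rightarrow> nat) \<Rightarrow> (nat \<Rightarrow> nat) \<Rightarrow> (nat \<Rightarrow> nat) \<Rightarrow> real" where
  "urn_term r \<alpha> k s L = shifted_ratio_prod (\<alpha> r) (s r) (\<Sum>j\<in>{1..r-1}. \<alpha> j (L j))
     * (\<Prod>j\<in>{1..r-1}. lagrange_weight (\<alpha> j) (k j) (s j) (L j))"

definition urn_formula :: "nat \<Rightarrow> (nat \<Rightarrow> nat \<Rightarrow> real) \<Rightarrow> (nat \<Rightarrow> nat) \<Rightarrow> (nat \<Rightarrow> nat) \<Rightarrow> real" where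
  "urn_formula r \<alpha> k s = (\<Sum>L\<in>Pi\<^sub>E {1..r-1} (\<lambda>j. {k j..s j}). urn_term r \<alpha> k s L)"

locale urn_weights =
  fixes r :: nat and \<alpha> :: "nat \<Rightarrow> nat \<Rightarrow> real"
  assumes two_le_r: "r \<ge> 2"
    and alpha_pos: "\<And>j h. j \<in> {1..r} \<Longrightarrow> h \<ge> 1 \<Longrightarrow> \<alpha> j h > 0"
    and alpha_distinct: "\<And>j h l. j \<in> {1..r} \<Longrightarrow> 1 \<le> h \<Longrightarrow> h < l \<Longrightarrow> \<alpha> j h \<noteq> \<alpha> j l"
    and alpha_0: "\<And>j. j \<in> {1..r} \<Longrightarrow> \<alpha> j 0 = 0"
begin

lemma inj_alpha:
  assumes j: "j \<in> {1..r}"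
  shows "inj (\<alpha> j)"
proof -
  have "\<alpha> j h \<noteq> \<alpha> j l" if "h < l" for h l
    using that alpha_distinct[OF j, of h l] alpha_pos[OF j, of l] alpha_0[OF j]
    by (cases "h = 0") auto
  then show ?thesis
    by (metis injI linorder_neqE_nat)
qed

lemma alpha_nonneg: "j \<in> {1..r} \<Longrightarrow> \<alpha> j h \<ge> 0"
  using alpha_pos[of j h] alpha_0[of j] by (cases "h = 0") auto

lemma urn_formula_stopped:
  assumes "urn_stopped r s"
  shows "urn_formula r \<alpha> k s = (if \<forall>j\<in>{1..r-1}. s j = k j then 1 else 0)"
proof -
  let ?I = "{1..r-1}"
  have ratio_1: "shifted_ratio_prod (\<alpha> r) (s r) (\<Sum>j\<in>?I. \<alpha> j (L j)) = 1"
    if L: "L \<in> Pi\<^sub>E ?I (\<lambda>j. {k j..s j})" for L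
    using assms unfolding urn_stopped_def
  proof
    assume "\<forall>j\<in>?I. s j = 0"
    then have "(\<Sum>j\<in>?I. \<alpha> j (L j)) = 0"
      using L alpha_0 by (intro sum.neutral) (auto simp: PiE_iff)
    moreover have "\<alpha> r f \<noteq> 0" if "f \<ge> 1" for f
      using alpha_pos[of r f] two_le_r that by simp
    ultimately show ?thesis
      by (simp add: shifted_ratio_prod_def)
  qed (simp add: shifted_ratio_prod_def)
  have "urn_formula r \<alpha> k s
      = (\<Sum>L\<in>Pi\<^sub>E ?I (\<lambda>j. {k j..s j}). \<Prod>j\<in>?I. lagrange_weight (\<alpha> j) (k j) (s j) (L j))"
    unfolding urn_formula_def urn_term_def using ratio_1 by (intro sum.cong) simp_all
  also have "\<dots> = (\<Prod>j\<in>?I. \<Sum>l\<in>{k j..s j}. lagrange_weight (\<alpha> j) (k j) (s j) l)"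
    by (rule prod_sum_PiE[symmetric]) auto
  also have "\<dots> = (\<Prod>j\<in>?I. if s j = k j then 1 else 0)"
    using inj_alpha by (intro prod.cong refl sum_lagrange_weight) (auto intro: inj_on_subset[of _ UNIV])
  also have "\<dots> = (if \<forall>j\<in>?I. s j = k j then 1 else 0)"
    by simp
  finally show ?thesis .
qed

lemma urn_formula_step_last:
  assumes "s r \<ge> 1"
  shows "\<alpha> r (s r) * urn_formula r \<alpha> k (s(r := s r - 1))
    = (\<Sum>L\<in>Pi\<^sub>E {1..r-1} (\<lambda>j. {k j..s j}). (\<alpha> r (s r) + (\<Sum>j\<in>{1..r-1}. \<alpha> j (L j))) * urn_term r \<alpha> k s L)"
proof -
  let ?I = "{1..r-1}" and ?s' = "s(r := s r - 1)"
  obtain m where m: "s r = Suc m"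
    using assms by (cases "s r") auto
  have same: "?s' j = s j" if "j \<in> ?I" for j
    using that two_le_r by auto
  have weighted_term: "\<alpha> r (s r) * urn_term r \<alpha> k ?s' L = (\<alpha> r (s r) + \<sigma>) * urn_term r \<alpha> k s L"
    if \<sigma>: "\<sigma> = (\<Sum>j\<in>?I. \<alpha> j (L j))" for L \<sigma>
  proof -
    have "\<sigma> \<ge> 0"
      unfolding \<sigma> using alpha_nonneg by (intro sum_nonneg) auto
    moreover have "\<alpha> r (s r) > 0"
      using alpha_pos[of r "s r"] assms two_le_r by simp
    ultimately have "(\<alpha> r (s r) + \<sigma>) * shifted_ratio_prod (\<alpha> r) (s r) \<sigma>
        = \<alpha> r (s r) * shifted_ratio_prod (\<alpha> r) m \<sigma>"
      unfolding m by (intro shifted_ratio_prod_Suc) simp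
    moreover have "(\<Prod>j\<in>?I. lagrange_weight (\<alpha> j) (k j) (?s' j) (L j))
        = (\<Prod>j\<in>?I. lagrange_weight (\<alpha> j) (k j) (s j) (L j))"
      using same by (intro prod.cong) simp_all
    ultimately show ?thesis
      unfolding urn_term_def \<sigma>[symmetric] using m by (simp add: mult.assoc)
  qed
  have "Pi\<^sub>E ?I (\<lambda>j. {k j..?s' j}) = Pi\<^sub>E ?I (\<lambda>j. {k j..s j})"
    using same by (intro PiE_cong) simp
  then show ?thesis
    unfolding urn_formula_def sum_distrib_left using weighted_term by simp
qed

lemma urn_formula_step:
  assumes j: "j \<in> {1..r-1}"
  shows "\<alpha> j (s j) * urn_formula r \<alpha> k (s(j := s j - 1))
    = (\<Sum>L\<in>Pi\<^sub>E {1..r-1} (\<lambda>j. {k j..s j}). (\<alpha> j (s j) - \<alpha> j (L j)) * urn_term r \<alpha> k s L)"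
proof -
  have jr: "j \<in> {1..r}"
    using j by auto
  show ?thesis
  proof (cases "s j")
    case 0
    have "\<alpha> j (L j) = 0" if "L \<in> Pi\<^sub>E {1..r-1} (\<lambda>j. {k j..s j})" for L
      using PiE_mem[OF that, of j] j 0 alpha_0[OF jr] by simp
    moreover have "\<alpha> j (s j) = 0"
      using 0 alpha_0[OF jr] by simp
    ultimately show ?thesis
      by (simp add: sum.neutral)
  next
    case (Suc m)
    let ?I = "{1..r-1}" and ?s' = "s(j := m)"
    let ?P = "Pi\<^sub>E ?I (\<lambda>i. {k i..s i})"
    let ?w = "\<lambda>s L i. lagrange_weight (\<alpha> i) (k i) (s i) (L i)"
    have P': "Pi\<^sub>E ?I (\<lambda>i. {k i..?s' i}) = {L \<in> ?P. L j \<noteq> s j}"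
      using j Suc by (rule PiE_atLeastAtMost_fun_upd_Suc)
    have weighted_term: "\<alpha> j (s j) * urn_term r \<alpha> k ?s' L = (\<alpha> j (s j) - \<alpha> j (L j)) * urn_term r \<alpha> k s L"
      if L: "L \<in> ?P" "L j \<noteq> s j" for L
    proof -
      have "k j \<le> L j" "L j \<le> m"
        using PiE_mem[OF L(1) j] L(2) Suc by auto
      moreover have "\<alpha> j (Suc m) \<noteq> \<alpha> j (L j)"
        using inj_alpha[OF jr] L(2) Suc by (auto dest: injD)
      ultimately have weight: "(\<alpha> j (s j) - \<alpha> j (L j)) * ?w s L j = \<alpha> j (s j) * ?w ?s' L j"
        unfolding Suc by (simp add: lagrange_weight_Suc)
      have split_off_j: "(\<Prod>i\<in>?I. ?w t L i) = ?w t L j * (\<Prod>i\<in>?I-{j}. ?w s L i)"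
        if "\<forall>i. i \<noteq> j \<longrightarrow> t i = s i" for t
      proof -
        have "(\<Prod>i\<in>?I-{j}. ?w t L i) = (\<Prod>i\<in>?I-{j}. ?w s L i)"
          using that by (intro prod.cong) auto
        then show ?thesis
          by (simp only: prod.remove[OF finite_atLeastAtMost j])
      qed
      have s'_r: "?s' r = s r"
        using j two_le_r by auto
      have split_s: "(\<Prod>i\<in>?I. ?w s L i) = ?w s L j * (\<Prod>i\<in>?I-{j}. ?w s L i)"
        "(\<Prod>i\<in>?I. ?w ?s' L i) = ?w ?s' L j * (\<Prod>i\<in>?I-{j}. ?w s L i)"
        by (rule split_off_j; simp)+
      have "(\<alpha> j (s j) - \<alpha> j (L j)) * urn_term r \<alpha> k s L
          = shifted_ratio_prod (\<alpha> r) (s r) (\<Sum>i\<in>?I. \<alpha> i (L i)) * (\<Prod>i\<in>?I-{j}. ?w s L i)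
            * ((\<alpha> j (s j) - \<alpha> j (L j)) * ?w s L j)"
        and "\<alpha> j (s j) * urn_term r \<alpha> k ?s' L
          = shifted_ratio_prod (\<alpha> r) (s r) (\<Sum>i\<in>?I. \<alpha> i (L i)) * (\<Prod>i\<in>?I-{j}. ?w s L i)
            * (\<alpha> j (s j) * ?w ?s' L j)"
        unfolding urn_term_def s'_r split_s by (simp_all only: ac_simps)
      with weight show ?thesis
        by simp
    qed
    have "(\<Sum>L\<in>?P. (\<alpha> j (s j) - \<alpha> j (L j)) * urn_term r \<alpha> k s L)
        = (\<Sum>L\<in>{L \<in> ?P. L j \<noteq> s j}. (\<alpha> j (s j) - \<alpha> j (L j)) * urn_term r \<alpha> k s L)"
      by (intro sum.mono_neutral_right) (auto simp: finite_PiE)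
    also have "\<dots> = (\<Sum>L\<in>{L \<in> ?P. L j \<noteq> s j}. \<alpha> j (s j) * urn_term r \<alpha> k ?s' L)"
      using weighted_term by simp
    also have "\<dots> = \<alpha> j (s j) * urn_formula r \<alpha> k ?s'"
      unfolding urn_formula_def P' sum_distrib_left ..
    finally show ?thesis
      using Suc by simp
  qed
qed

lemma urn_formula_recurrence:
  assumes "s r \<ge> 1"
  shows "(\<Sum>l\<in>{1..r}. \<alpha> l (s l) * urn_formula r \<alpha> k (s(l := s l - 1)))
    = (\<Sum>l\<in>{1..r}. \<alpha> l (s l)) * urn_formula r \<alpha> k s"
proof -
  let ?I = "{1..r-1}"
  let ?P = "Pi\<^sub>E ?I (\<lambda>j. {k j..s j})" and ?T = "urn_term r \<alpha> k s"
  have split: "{1..r} = insert r ?I" "r \<notin> ?I"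
    using two_le_r by auto
  have "(\<Sum>l\<in>{1..r}. \<alpha> l (s l) * urn_formula r \<alpha> k (s(l := s l - 1)))
      = (\<Sum>L\<in>?P. (\<alpha> r (s r) + (\<Sum>j\<in>?I. \<alpha> j (L j))) * ?T L)
        + (\<Sum>j\<in>?I. \<Sum>L\<in>?P. (\<alpha> j (s j) - \<alpha> j (L j)) * ?T L)"
    unfolding split(1) sum.insert[OF finite_atLeastAtMost split(2)]
    by (simp only: urn_formula_step_last[of s, OF assms] urn_formula_step cong: sum.cong)
  also have "\<dots> = (\<Sum>L\<in>?P. (\<alpha> r (s r) + (\<Sum>j\<in>?I. \<alpha> j (L j))) * ?T L
        + (\<Sum>j\<in>?I. (\<alpha> j (s j) - \<alpha> j (L j)) * ?T L))"
    by (simp add: sum.distrib, rule sum.swap)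
  also have "\<dots> = (\<Sum>L\<in>?P. (\<alpha> r (s r) + (\<Sum>j\<in>?I. \<alpha> j (s j))) * ?T L)"
    by (simp add: sum_subtractf algebra_simps flip: sum_distrib_right)
  also have "\<dots> = (\<Sum>l\<in>{1..r}. \<alpha> l (s l)) * urn_formula r \<alpha> k s"
    using split by (simp add: urn_formula_def sum_distrib_left)
  finally show ?thesis .
qed

lemma urn_absorb_eq_urn_formula:
  assumes "(\<Sum>j\<in>{1..r}. s j) \<le> m"
  shows "urn_absorb r \<alpha> m s (\<lambda>s. \<forall>j\<in>{1..r-1}. s j = k j) = urn_formula r \<alpha> k s"
  using assms
proof (induction m arbitrary: s)
  case 0
  then have "urn_stopped r s"
    using two_le_r by (simp add: urn_stopped_def)
  then show ?case
    by (simp add: urn_formula_stopped)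
next
  case (Suc m)
  show ?case
  proof (cases "urn_stopped r s")
    case True
    then show ?thesis
      by (simp add: urn_formula_stopped)
  next
    case False
    then have s_r: "s r \<ge> 1"
      by (auto simp: urn_stopped_def)
    define W where "W = (\<Sum>j\<in>{1..r}. \<alpha> j (s j))"
    have r: "r \<in> {1..r}"
      using two_le_r by simp
    have "0 < \<alpha> r (s r)"
      using alpha_pos[OF r] s_r by simp
    also have "\<dots> \<le> W"
      unfolding W_def using alpha_nonneg by (intro member_le_sum r) auto
    finally have "W > 0" .
    have IH: "\<alpha> l (s l) * urn_absorb r \<alpha> m (s(l := s l - 1)) (\<lambda>s. \<forall>j\<in>{1..r-1}. s j = k j)
        = \<alpha> l (s l) * urn_formula r \<alpha> k (s(l := s l - 1))" if l: "l \<in> {1..r}" for l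
    proof (cases "s l")
      case 0
      then show ?thesis
        using alpha_0[OF l] by simp
    next
      case (Suc n)
      have "(\<Sum>j\<in>{1..r}. (s(l := n)) j) = n + (\<Sum>j\<in>{1..r}-{l}. s j)"
        using sum.remove[OF finite_atLeastAtMost l, of "s(l := n)"] by simp
      moreover have "(\<Sum>j\<in>{1..r}. s j) = Suc n + (\<Sum>j\<in>{1..r}-{l}. s j)"
        using sum.remove[OF finite_atLeastAtMost l, of s] Suc by simp
      ultimately have "(\<Sum>j\<in>{1..r}. (s(l := n)) j) \<le> m"
        using Suc.prems by simp
      then have "urn_absorb r \<alpha> m (s(l := n)) (\<lambda>s. \<forall>j\<in>{1..r-1}. s j = k j)
          = urn_formula r \<alpha> k (s(l := n))"
        by (rule Suc.IH)
      with Suc show ?thesis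
        by simp
    qed
    have "urn_absorb r \<alpha> (Suc m) s (\<lambda>s. \<forall>j\<in>{1..r-1}. s j = k j)
        = (\<Sum>l\<in>{1..r}. \<alpha> l (s l) * urn_absorb r \<alpha> m (s(l := s l - 1)) (\<lambda>s. \<forall>j\<in>{1..r-1}. s j = k j)) / W"
      using False by (simp add: W_def sum_divide_distrib)
    also have "\<dots> = (\<Sum>l\<in>{1..r}. \<alpha> l (s l) * urn_formula r \<alpha> k (s(l := s l - 1))) / W"
      using IH by (intro arg_cong[where f = "\<lambda>x. x / W"] sum.cong) simp_all
    also have "\<dots> = urn_formula r \<alpha> k s"
      unfolding urn_formula_recurrence[of s, OF s_r] W_def[symmetric] using \<open>W > 0\<close> by simp
    finally show ?thesis .
  qed
qed

end

theorem theorem3: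
  fixes r :: nat and \<alpha> :: "nat \<Rightarrow> nat \<Rightarrow> real" and n k :: "nat \<Rightarrow> nat"
  assumes "r \<ge> 2"
    and "\<And>j h. j \<in> {1..r} \<Longrightarrow> h \<ge> 1 \<Longrightarrow> \<alpha> j h > 0"
    and "\<And>j h l. j \<in> {1..r} \<Longrightarrow> 1 \<le> h \<Longrightarrow> h < l \<Longrightarrow> \<alpha> j h \<noteq> \<alpha> j l"
    and "\<And>j. j \<in> {1..r} \<Longrightarrow> \<alpha> j 0 = 0"
    and "\<And>j. j \<in> {1..r} \<Longrightarrow> n j \<ge> 1"
    and "\<And>j. j \<in> {1..r-1} \<Longrightarrow> k j \<le> n j"
  shows "urn_prob_X r \<alpha> n k =
    (\<Sum>L\<in>Pi\<^sub>E {1..r-1} (\<lambda>j. {k j..n j}).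
       ((\<Prod>f\<in>{1..n r}. \<alpha> r f) * (\<Prod>j\<in>{1..r-1}. \<Prod>h\<in>{k j+1..n j}. \<alpha> j h))
       / ((\<Prod>f\<in>{1..n r}. \<alpha> r f + (\<Sum>j\<in>{1..r-1}. \<alpha> j (L j)))
          * (\<Prod>j\<in>{1..r-1}. \<Prod>h\<in>{k j..n j} - {L j}. \<alpha> j h - \<alpha> j (L j))))"
proof -
  interpret urn_weights r \<alpha>
    using assms(1-4) by unfold_locales
  have "urn_prob_X r \<alpha> n k = urn_formula r \<alpha> k n"
    unfolding urn_prob_X_def by (rule urn_absorb_eq_urn_formula) simp
  then show ?thesis
    by (simp add: urn_formula_def urn_term_def shifted_ratio_prod_def lagrange_weight_def
        prod_dividef times_divide_times_eq)
qed

end
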